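(* Let $\Delta\vdash t$ be a closed nominal term-in-context and $\sigma$ a nominal substitution satisfying $\Delta$ (i.e., $\vdash a\#X\sigma$ for all $a\#X\in\Delta$) with domain contained in the variables of $t$ and $t\sigma$ ground. Let $\hat\sigma=\mathcal{T}^{s}(\Delta,t,\sigma)$. Then for every subterm $t'$ of $t$ (in particular $t'=t$), $[\![t'\sigma]\!]^{\Delta}_{\Lambda_t}=\hat\sigma([\![t']\!]^{\Delta}_{\Lambda_t})$.
   Context: Nominal terms: $s,t ::= a \mid \pi\cdot X \mid [a]s \mid f\,s \mid (s_1,\ldots,s_n)$ over atoms, variables, function symbols and finite-support permutations $\pi$ of atoms acting on terms in the usual nominal way. A freshness context $\Delta$ is a set of constraints $a\#X$; freshness judgements $\vdash a\#s$ are the standard nominal ones. Substitutions map variables to terms and are applied without avoiding capture, $(\pi\cdot X)\sigma=\pi\cdot(X\sigma)$. $\Delta\vdash t$ is closed if: (1) every atom occurrence $a$ in $t$ lies under an abstraction $[a]$; (2) if $\pi\cdot X$ is in the scope of an abstraction of $\pi(a)$ then every occurrence $\pi'\cdot X$ of $X$ in $t$ is in the scope of an abstraction of $\pi'(a)$, or $a\#X\in\Delta$; (3) for two occurrences $\pi_1\cdot X,\pi_2\cdot X$ and $a$ with $\pi_1(a)\neq\pi_2(a)$, if $a$ is not abstracted in one of the occurrences then $a\#X\in\Delta$. CRS: meta-terms $a\mid Z(t_1,\dots,t_n)\mid[a]t\mid f\,t\mid(t_1,\dots,t_n)$ modulo bound-variable renaming; a valuation assigns to an $n$-ary meta-variable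 a substitute $\underline{\lambda}(a_1,\dots,a_n).s$, and $\hat\sigma(Z(u_1,\dots,u_n))$ is $s$ with each $a_i$ replaced capture-avoidingly by $\hat\sigma(u_i)$, $\hat\sigma$ homomorphic on other constructs. Translation: $\Lambda_t(X)$ is the set of atoms $a$ such that some occurrence of $X$ in $t$ is in the scope of $[a]$ (a map from variables to sets of atoms). Fix a total order on atoms. For a map $\Lambda$ from variables to atom sets, $[\![\cdot]\!]^{\Delta}_{\Lambda}$ keeps atoms, abstractions, function applications and tuples unchanged and maps $\pi\cdot X$ to $X(\pi\cdot xs)$, where $xs$ is the ascending list of $\{\pi^{-1}(a)\mid a\in\Lambda(X)\}\setminus\{a\mid a\#X\in\Delta\}$ and $\pi$ is applied elementwise (no arguments if empty). Substitution translation: for $\sigma=[X_i\mapsto t_i]$, $\mathcal{T}^{s}(\Delta,t,\sigma)=[X_i\mapsto\underline{\lambda}(\pi_i\cdot xs_i).s_i]$, where $\pi_i$ is the permutation of the leftmost occurrence $\pi_i\cdot X_i$ of $X_i$ in $t$, $xs_i$ is the ascending list of $\{\pi_i^{-1}(a)\mid a\in\Lambda_t(X_i)\}\setminus\{a\mid a\#X_i\in\Delta\}$, and $s_i=[\![\pi_i\cdot t_i]\!]^{\Delta}_{\Lambda_{\pi_i\cdot t_i}}$. *)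

theory Defs
  imports Main "HOL-Combinatorics.Perm"
begin

text \<open>Atoms are natural numbers; the fixed total order on atoms is the usual order on nat.
  Variables (= CRS meta-variables) have type 'v, function symbols type 'f.\<close>

type_synonym atom = nat

datatype ('f, 'v) nterm =
    Atm atom
  | Susp "atom perm" 'v
  | Abs atom "('f, 'v) nterm"
  | Fn 'f "('f, 'v) nterm"
  | Tup "('f, 'v) nterm list"

fun pact :: "atom perm \<Rightarrow> ('f, 'v) nterm \<Rightarrow> ('f, 'v) nterm" where
  "pact p (Atm a) = Atm (Perm.apply p a)"
| "pact p (Susp q X) = Susp (p * q) X"
| "pact p (Abs a s) = Abs (Perm.apply p a) (pact p s)"
| "pact p (Fn f s) = Fn f (pact p s)"
| "pact p (Tup ts) = Tup (map (pact p) ts)"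

text \<open>Freshness judgement  Delta |- a # s  (Delta a set of constraints a # X, as pairs (a, X)).\<close>
fun fresh :: "(atom \<times> 'v) set \<Rightarrow> atom \<Rightarrow> ('f, 'v) nterm \<Rightarrow> bool" where
  "fresh D a (Atm b) = (a \<noteq> b)"
| "fresh D a (Susp p X) = ((Perm.apply (inverse p) a, X) \<in> D)"
| "fresh D a (Abs b s) = (a = b \<or> fresh D a s)"
| "fresh D a (Fn f s) = fresh D a s"
| "fresh D a (Tup ts) = (\<forall>s\<in>set ts. fresh D a s)"

text \<open>Substitution (not capture avoiding): (pi . X) sigma = pi . (X sigma).\<close>
fun nsubst :: "('v \<rightharpoonup> ('f, 'v) nterm) \<Rightarrow> ('f, 'v) nterm \<Rightarrow> ('f, 'v) nterm" where
  "nsubst \<sigma> (Atm a) = Atm a"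
| "nsubst \<sigma> (Susp p X) = (case \<sigma> X of Some s \<Rightarrow> pact p s | None \<Rightarrow> Susp p X)"
| "nsubst \<sigma> (Abs a s) = Abs a (nsubst \<sigma> s)"
| "nsubst \<sigma> (Fn f s) = Fn f (nsubst \<sigma> s)"
| "nsubst \<sigma> (Tup ts) = Tup (map (nsubst \<sigma>) ts)"

text \<open>Occurrences of variables, in left-to-right order, each with the set of atoms
  abstracted above it (its scope).\<close>
fun occsB :: "atom set \<Rightarrow> ('f, 'v) nterm \<Rightarrow> (atom set \<times> atom perm \<times> 'v) list" where
  "occsB B (Atm a) = []"
| "occsB B (Susp p X) = [(B, p, X)]"
| "occsB B (Abs a s) = occsB (insert a B) s"
| "occsB B (Fn f s) = occsB B s"
| "occsB B (Tup ts) = concat (map (occsB B) ts)"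

definition occs :: "('f, 'v) nterm \<Rightarrow> (atom set \<times> atom perm \<times> 'v) list" where
  "occs t = occsB {} t"

fun aoccsB :: "atom set \<Rightarrow> ('f, 'v) nterm \<Rightarrow> (atom set \<times> atom) list" where
  "aoccsB B (Atm a) = [(B, a)]"
| "aoccsB B (Susp p X) = []"
| "aoccsB B (Abs a s) = aoccsB (insert a B) s"
| "aoccsB B (Fn f s) = aoccsB B s"
| "aoccsB B (Tup ts) = concat (map (aoccsB B) ts)"

definition vars :: "('f, 'v) nterm \<Rightarrow> 'v set" where
  "vars t = {X. \<exists>B p. (B, p, X) \<in> set (occs t)}"

definition ground :: "('f, 'v) nterm \<Rightarrow> bool" where
  "ground t \<longleftrightarrow> vars t = {}"

fun subterms :: "('f, 'v) nterm \<Rightarrow> ('f, 'v) nterm set" where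
  "subterms (Atm a) = {Atm a}"
| "subterms (Susp p X) = {Susp p X}"
| "subterms (Abs a s) = insert (Abs a s) (subterms s)"
| "subterms (Fn f s) = insert (Fn f s) (subterms s)"
| "subterms (Tup ts) = insert (Tup ts) (\<Union> (set (map subterms ts)))"

definition closed :: "(atom \<times> 'v) set \<Rightarrow> ('f, 'v) nterm \<Rightarrow> bool" where
  "closed D t \<longleftrightarrow>
     (\<forall>(B, a) \<in> set (aoccsB {} t). a \<in> B) \<and>
     (\<forall>(B, p, X) \<in> set (occs t). \<forall>a. Perm.apply p a \<in> B \<longrightarrow>
         (\<forall>(B', p', X') \<in> set (occs t). X' = X \<longrightarrow> Perm.apply p' a \<in> B') \<or> (a, X) \<in> D) \<and>
     (\<forall>(B1, p1, X1) \<in> set (occs t). \<forall>(B2, p2, X2) \<in> set (occs t). \<forall>a.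
         X1 = X2 \<longrightarrow> Perm.apply p1 a \<noteq> Perm.apply p2 a \<longrightarrow>
         (Perm.apply p1 a \<notin> B1 \<or> Perm.apply p2 a \<notin> B2) \<longrightarrow> (a, X1) \<in> D)"

definition lam :: "('f, 'v) nterm \<Rightarrow> 'v \<Rightarrow> atom set" where
  "lam t X = {a. \<exists>B p. (B, p, X) \<in> set (occs t) \<and> a \<in> B}"

datatype ('f, 'v) mterm =
    MAtm atom
  | MVar 'v "('f, 'v) mterm list"
  | MAbs atom "('f, 'v) mterm"
  | MFn 'f "('f, 'v) mterm"
  | MTup "('f, 'v) mterm list"

fun fv :: "('f, 'v) mterm \<Rightarrow> atom set" where
  "fv (MAtm a) = {a}"
| "fv (MVar Z us) = \<Union> (set (map fv us))"
| "fv (MAbs a s) = fv s - {a}"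
| "fv (MFn f s) = fv s"
| "fv (MTup us) = \<Union> (set (map fv us))"

definition fresh_for :: "atom set \<Rightarrow> atom \<Rightarrow> atom" where
  "fresh_for S b = (if b \<notin> S then b else (LEAST c. c \<notin> S))"

fun msubst :: "(atom \<Rightarrow> ('f, 'v) mterm) \<Rightarrow> ('f, 'v) mterm \<Rightarrow> ('f, 'v) mterm" where
  "msubst \<rho> (MAtm a) = \<rho> a"
| "msubst \<rho> (MVar Z us) = MVar Z (map (msubst \<rho>) us)"
| "msubst \<rho> (MAbs b s) =
     (let c = fresh_for (\<Union>a\<in>fv s - {b}. fv (\<rho> a)) b
      in MAbs c (msubst (\<rho>(b := MAtm c)) s))"
| "msubst \<rho> (MFn f s) = MFn f (msubst \<rho> s)"
| "msubst \<rho> (MTup us) = MTup (map (msubst \<rho>) us)"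

inductive alpha :: "('f, 'v) mterm \<Rightarrow> ('f, 'v) mterm \<Rightarrow> bool" where
  "alpha (MAtm a) (MAtm a)"
| "list_all2 alpha us vs \<Longrightarrow> alpha (MVar Z us) (MVar Z vs)"
| "c \<notin> fv s \<union> fv t \<Longrightarrow>
   alpha (msubst (MAtm(a := MAtm c)) s) (msubst (MAtm(b := MAtm c)) t) \<Longrightarrow>
   alpha (MAbs a s) (MAbs b t)"
| "alpha s t \<Longrightarrow> alpha (MFn f s) (MFn f t)"
| "list_all2 alpha us vs \<Longrightarrow> alpha (MTup us) (MTup vs)"

text \<open>Valuations: a meta-variable Z is mapped to a substitute lambda(a1,...,an).s,
  represented as the pair ([a1,...,an], s).\<close>
type_synonym ('f, 'v) valuation = "'v \<rightharpoonup> (atom list \<times> ('f, 'v) mterm)"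

definition sfv :: "('f, 'v) valuation \<Rightarrow> atom set" where
  "sfv V = (\<Union>{fv s - set as | Z as s. V Z = Some (as, s)})"

text \<open>Application of a valuation; rho is a pending (capture-avoiding) renaming of atoms,
  used to rename bound atoms away from the free atoms of the substitutes.\<close>
fun vapp :: "('f, 'v) valuation \<Rightarrow> (atom \<Rightarrow> ('f, 'v) mterm) \<Rightarrow> ('f, 'v) mterm \<Rightarrow> ('f, 'v) mterm" where
  "vapp V \<rho> (MAtm a) = \<rho> a"
| "vapp V \<rho> (MVar Z us) =
     (case V Z of
        None \<Rightarrow> MVar Z (map (vapp V \<rho>) us)
      | Some (as, s) \<Rightarrow>
          msubst (\<lambda>a. case map_of (zip as (map (vapp V \<rho>) us)) a of
                         Some u \<Rightarrow> u | None \<Rightarrow> MAtm a) s)"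
| "vapp V \<rho> (MAbs b s) =
     (let c = fresh_for ((\<Union>a\<in>fv s - {b}. fv (\<rho> a)) \<union> sfv V) b
      in MAbs c (vapp V (\<rho>(b := MAtm c)) s))"
| "vapp V \<rho> (MFn f s) = MFn f (vapp V \<rho> s)"
| "vapp V \<rho> (MTup us) = MTup (map (vapp V \<rho>) us)"

definition apply_val :: "('f, 'v) valuation \<Rightarrow> ('f, 'v) mterm \<Rightarrow> ('f, 'v) mterm" where
  "apply_val V t = vapp V MAtm t"

fun tr :: "(atom \<times> 'v) set \<Rightarrow> ('v \<Rightarrow> atom set) \<Rightarrow> ('f, 'v) nterm \<Rightarrow> ('f, 'v) mterm" where
  "tr D L (Atm a) = MAtm a"
| "tr D L (Susp p X) =
     MVar X (map (\<lambda>a. MAtm (Perm.apply p a))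
       (sorted_list_of_set ((\<lambda>a. Perm.apply (inverse p) a) ` L X - {a. (a, X) \<in> D})))"
| "tr D L (Abs a s) = MAbs a (tr D L s)"
| "tr D L (Fn f s) = MFn f (tr D L s)"
| "tr D L (Tup ts) = MTup (map (tr D L) ts)"

definition lperm :: "('f, 'v) nterm \<Rightarrow> 'v \<Rightarrow> atom perm" where
  "lperm t X = fst (snd (hd (filter (\<lambda>oc. snd (snd oc) = X) (occs t))))"

definition subst_tr :: "(atom \<times> 'v) set \<Rightarrow> ('f, 'v) nterm \<Rightarrow> ('v \<rightharpoonup> ('f, 'v) nterm)
                        \<Rightarrow> ('f, 'v) valuation" where
  "subst_tr D t \<sigma> X =
     (case \<sigma> X of
        None \<Rightarrow> None
      | Some ti \<Rightarrow>
          (let p = lperm t X;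
               xs = sorted_list_of_set ((\<lambda>a. Perm.apply (inverse p) a) ` lam t X - {a. (a, X) \<in> D})
           in Some (map (\<lambda>a. Perm.apply p a) xs, tr D (lam (pact p ti)) (pact p ti))))"

end

theory Submission
  imports Defs
begin

text \<open>Alpha-equivalence of meta-terms is decided by comparing locally nameless forms, in which
  bound atoms become de Bruijn levels; these forms are invariant under the renaming of bound atoms
  that capture-avoiding application of a valuation performs. The identity is then proved by
  induction over the subterm, carrying the renaming accumulated at the binders above it. At a
  suspension \<open>\<pi>\<cdot>X\<close>, closedness ensures that every occurrence of \<open>X\<close> has the same argument
  set as the leftmost one and that \<open>\<pi>\<close> agrees with the leftmost permutation outside it, so
  instantiating the parameters of the substitute for \<open>X\<close> rebuilds the translation of
  \<open>\<pi>\<cdot>(X\<sigma>)\<close>; the freshness constraints satisfied by \<open>\<sigma>\<close> account for the atoms left out of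
  the argument lists.\<close>

lemma apply_apply_inverse [simp]: "Perm.apply p (Perm.apply (inverse p) a) = a"
  by (simp add: apply_inverse surj_f_inv_f bij_is_surj)

lemma apply_inverse_apply [simp]: "Perm.apply (inverse p) (Perm.apply p a) = a"
  by (simp add: apply_inverse inv_f_f bij_is_inj)

lemma fresh_for_notin: "finite S \<Longrightarrow> fresh_for S b \<notin> S"
  unfolding fresh_for_def by (metis LeastI_ex ex_new_if_finite infinite_UNIV_nat)

lemma finite_fv [simp]: "finite (fv s)"
  by (induction s) auto

section \<open>Locally nameless form of meta-terms\<close>

text \<open>Bound atoms become de Bruijn levels (counted from the root), not indices.\<close>

datatype ('f, 'v) dbterm =
    DFree atom
  | DBound nat
  | DVar 'v "('f, 'v) dbterm list"
  | DAbs "('f, 'v) dbterm"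
  | DFn 'f "('f, 'v) dbterm"
  | DTup "('f, 'v) dbterm list"

fun db :: "nat \<Rightarrow> (atom \<Rightarrow> ('f, 'v) dbterm) \<Rightarrow> ('f, 'v) mterm \<Rightarrow> ('f, 'v) dbterm" where
  "db k g (MAtm a) = g a"
| "db k g (MVar Z us) = DVar Z (map (db k g) us)"
| "db k g (MAbs a s) = DAbs (db (Suc k) (g(a := DBound k)) s)"
| "db k g (MFn f s) = DFn f (db k g s)"
| "db k g (MTup us) = DTup (map (db k g) us)"

fun map_leaves :: "(('f, 'v) dbterm \<Rightarrow> ('f, 'v) dbterm) \<Rightarrow> ('f, 'v) dbterm \<Rightarrow> ('f, 'v) dbterm" where
  "map_leaves h (DFree a) = h (DFree a)"
| "map_leaves h (DBound i) = h (DBound i)"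
| "map_leaves h (DVar Z us) = DVar Z (map (map_leaves h) us)"
| "map_leaves h (DAbs s) = DAbs (map_leaves h s)"
| "map_leaves h (DFn f s) = DFn f (map_leaves h s)"
| "map_leaves h (DTup us) = DTup (map (map_leaves h) us)"

lemma db_cong: "(\<And>x. x \<in> fv s \<Longrightarrow> g x = g' x) \<Longrightarrow> db k g s = db k g' s"
proof (induction s arbitrary: k g g')
  case (MAbs a s)
  have "db (Suc k) (g(a := DBound k)) s = db (Suc k) (g'(a := DBound k)) s"
    by (rule MAbs.IH) (use MAbs.prems in auto)
  then show ?case by simp
next
  case (MVar Z us)
  have "db k g u = db k g' u" if "u \<in> set us" for u
    by (rule MVar.IH[OF that]) (use MVar.prems that in auto)
  then show ?case by (simp cong: map_cong)
next
  case (MTup us)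
  have "db k g u = db k g' u" if "u \<in> set us" for u
    by (rule MTup.IH[OF that]) (use MTup.prems that in auto)
  then show ?case by (simp cong: map_cong)
next
  case (MFn f s)
  then show ?case by (metis db.simps(4) fv.simps(4))
qed simp

lemma map_leaves_db:
  assumes "\<And>x. x \<in> fv s \<Longrightarrow> map_leaves h (g x) = g' x"
    and "\<And>j. h (DBound (k + j)) = DBound (k' + j)"
  shows "map_leaves h (db k g s) = db k' g' s"
  using assms
proof (induction s arbitrary: k k' g g')
  case (MAbs a s)
  have "map_leaves h (db (Suc k) (g(a := DBound k)) s) = db (Suc k') (g'(a := DBound k')) s"
  proof (rule MAbs.IH)
    show "map_leaves h ((g(a := DBound k)) x) = (g'(a := DBound k')) x" if "x \<in> fv s" for x
      using that MAbs.prems(1) MAbs.prems(2)[of 0] by auto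
    show "h (DBound (Suc k + j)) = DBound (Suc k' + j)" for j
      using MAbs.prems(2)[of "Suc j"] by simp
  qed
  then show ?case by simp
next
  case (MVar Z us)
  have "map_leaves h (db k g u) = db k' g' u" if "u \<in> set us" for u
    by (rule MVar.IH[OF that]) (use MVar.prems that in auto)
  then show ?case by (simp cong: map_cong)
next
  case (MTup us)
  have "map_leaves h (db k g u) = db k' g' u" if "u \<in> set us" for u
    by (rule MTup.IH[OF that]) (use MTup.prems that in auto)
  then show ?case by (simp cong: map_cong)
next
  case (MFn f s)
  then show ?case by (metis db.simps(4) fv.simps(4) map_leaves.simps(5))
qed simp

lemma comp_MAtm_fun_upd: "(MAtm \<circ> f)(b := MAtm c) = MAtm \<circ> f(b := c)"
  by (simp add: fun_upd_comp)

lemma db_msubst_rename: "db k g (msubst (MAtm \<circ> f) s) = db k (g \<circ> f) s"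
proof (induction s arbitrary: k g f)
  case (MAbs b s)
  define c where "c = fresh_for (\<Union>a\<in>fv s - {b}. fv ((MAtm \<circ> f) a)) b"
  have c: "c \<notin> f ` (fv s - {b})"
    using fresh_for_notin[of "\<Union>a\<in>fv s - {b}. fv ((MAtm \<circ> f) a)" b] by (auto simp: c_def)
  have "msubst (MAtm \<circ> f) (MAbs b s) = MAbs c (msubst (MAtm \<circ> f(b := c)) s)"
    by (simp add: c_def Let_def comp_MAtm_fun_upd)
  then have "db k g (msubst (MAtm \<circ> f) (MAbs b s))
      = DAbs (db (Suc k) (g(c := DBound k)) (msubst (MAtm \<circ> f(b := c)) s))"
    by simp
  also have "\<dots> = DAbs (db (Suc k) (g(c := DBound k) \<circ> f(b := c)) s)"
    by (simp only: MAbs.IH)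
  also have "\<dots> = DAbs (db (Suc k) ((g \<circ> f)(b := DBound k)) s)"
    using c by (intro arg_cong[where f = DAbs] db_cong) auto
  finally show ?case by (simp only: db.simps)
next
  case (MVar Z us)
  have "db k g (msubst (MAtm \<circ> f) u) = db k (g \<circ> f) u" if "u \<in> set us" for u
    using MVar.IH[OF that] .
  then show ?case by (simp only: msubst.simps db.simps map_map comp_apply[of "db k g"] cong: map_cong)
next
  case (MTup us)
  have "db k g (msubst (MAtm \<circ> f) u) = db k (g \<circ> f) u" if "u \<in> set us" for u
    using MTup.IH[OF that] .
  then show ?case by (simp only: msubst.simps db.simps map_map comp_apply[of "db k g"] cong: map_cong)
qed simp_all

lemma size_msubst_rename: "size (msubst (MAtm \<circ> f) s) = size s"
proof (induction s arbitrary: f)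
  case (MAbs b s)
  then show ?case by (simp only: msubst.simps Let_def mterm.size comp_MAtm_fun_upd)
qed (simp_all add: size_list_conv_sum_list cong: map_cong)

lemma alpha_if_db_eq:
  fixes s t :: "('f, 'v) mterm"
  shows "db 0 DFree s = db 0 DFree t \<Longrightarrow> alpha s t"
proof (induction "size s" arbitrary: s t rule: less_induct)
  case less
  have pointwise: "list_all2 alpha us vs"
    if eq: "map (db 0 DFree) us = map (db 0 DFree) vs"
      and smaller: "\<And>u. u \<in> set us \<Longrightarrow> size u < size s" for us vs :: "('f, 'v) mterm list"
  proof -
    have len: "length us = length vs"
      using map_eq_imp_length_eq[OF eq] .
    have "alpha (us ! i) (vs ! i)" if i: "i < length us" for i
    proof (rule less.hyps)
      show "size (us ! i) < size s"
        using i by (simp add: smaller)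
      show "db 0 DFree (us ! i) = db 0 DFree (vs ! i)"
        using i len eq by (metis nth_map)
    qed
    with len show ?thesis
      by (simp add: list_all2_conv_all_nth)
  qed
  have in_list: "u \<in> set us \<Longrightarrow> size u < Suc (size_list size us)" for u :: "('f, 'v) mterm" and us
    using size_list_estimation'[of u us "size u" size] by simp
  show ?case
  proof (cases s)
    case (MAtm a)
    then show ?thesis
      using less.prems by (cases t) (auto intro: alpha.intros)
  next
    case (MVar Z us)
    then obtain vs where "t = MVar Z vs" "map (db 0 DFree) us = map (db 0 DFree) vs"
      using less.prems by (cases t) auto
    then show ?thesis
      using pointwise in_list MVar by (auto intro: alpha.intros)
  next
    case (MTup us)
    then obtain vs where "t = MTup vs" "map (db 0 DFree) us = map (db 0 DFree) vs"
      using less.prems by (cases t) auto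
    then show ?thesis
      using pointwise in_list MTup by (auto intro: alpha.intros)
  next
    case (MFn f s')
    then obtain t' where "t = MFn f t'" "db 0 DFree s' = db 0 DFree t'"
      using less.prems by (cases t) auto
    then show ?thesis
      using less.hyps MFn by (auto intro: alpha.intros)
  next
    case (MAbs a s')
    then obtain b t' where t: "t = MAbs b t'"
      and eq: "db 1 (DFree(a := DBound 0)) s' = db 1 (DFree(b := DBound 0)) t'"
      using less.prems by (cases t) auto
    obtain c where c: "c \<notin> fv s' \<union> fv t'"
      using ex_new_if_finite[OF infinite_UNIV_nat, of "fv s' \<union> fv t'"] by auto
    \<comment> \<open>instantiate the outermost bound level by the fresh atom c and shift the others down\<close>
    define h :: "('f, 'v) dbterm \<Rightarrow> ('f, 'v) dbterm" where
      "h = (\<lambda>x. case x of DBound 0 \<Rightarrow> DFree c | DBound (Suc j) \<Rightarrow> DBound j | y \<Rightarrow> y)"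
    have shift: "h (DBound (1 + j)) = DBound (0 + j)" for j
      by (simp add: h_def)
    have "db 0 DFree (msubst (MAtm \<circ> id(a := c)) s') = map_leaves h (db 1 (DFree(a := DBound 0)) s')"
      by (subst db_msubst_rename, rule sym, rule map_leaves_db[OF _ shift]) (auto simp: h_def)
    also have "\<dots> = map_leaves h (db 1 (DFree(b := DBound 0)) t')"
      by (simp only: eq)
    also have "\<dots> = db 0 DFree (msubst (MAtm \<circ> id(b := c)) t')"
      by (subst db_msubst_rename, rule map_leaves_db[OF _ shift]) (auto simp: h_def)
    finally have "alpha (msubst (MAtm \<circ> id(a := c)) s') (msubst (MAtm \<circ> id(b := c)) t')"
      by (intro less.hyps) (simp_all add: size_msubst_rename MAbs)
    then have "alpha (msubst (MAtm(a := MAtm c)) s') (msubst (MAtm(b := MAtm c)) t')"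
      by (simp only: fun_upd_comp comp_id)
    then show ?thesis
      unfolding t MAbs by (rule alpha.intros(3)[rotated]) (use c in auto)
  qed
qed

section \<open>Ground nominal terms and occurrences\<close>

fun susp_free :: "('f, 'v) nterm \<Rightarrow> bool" where
  "susp_free (Atm a) = True"
| "susp_free (Susp p X) = False"
| "susp_free (Abs a s) = susp_free s"
| "susp_free (Fn f s) = susp_free s"
| "susp_free (Tup ts) = (\<forall>s\<in>set ts. susp_free s)"

lemma occsB_eq_Nil_iff: "occsB B s = [] \<longleftrightarrow> susp_free s"
  by (induction s arbitrary: B) auto

lemma vars_eq_image: "vars t = (\<lambda>(B, p, X). X) ` set (occs t)"
  unfolding vars_def by force

lemma ground_iff_susp_free: "ground t \<longleftrightarrow> susp_free t"
  by (simp add: ground_def vars_eq_image occs_def occsB_eq_Nil_iff)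

lemma susp_free_pact [simp]: "susp_free (pact p s) = susp_free s"
  by (induction s) auto

lemma pact_one [simp]: "pact 1 s = s"
  by (induction s) (auto simp: map_idI)

lemma fresh_pact: "fresh D a (pact p s) \<longleftrightarrow> fresh D (Perm.apply (inverse p) a) s"
  by (induction s) (auto simp: apply_times)

lemma fv_tr_susp_free: "susp_free s \<Longrightarrow> fv (tr D L s) = {a. \<not> fresh {} a s}"
  by (induction s) auto

lemma db_tr_pact:
  "susp_free s \<Longrightarrow> db k g (tr D L (pact p s)) = db k (g \<circ> Perm.apply p) (tr D' L' s)"
proof (induction s arbitrary: k g)
  case (Abs a s)
  have upd: "g(Perm.apply p a := DBound k) \<circ> Perm.apply p = (g \<circ> Perm.apply p)(a := DBound k)"
    by (auto simp: fun_eq_iff apply_inj)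
  have "db (Suc k) (g(Perm.apply p a := DBound k)) (tr D L (pact p s))
      = db (Suc k) ((g \<circ> Perm.apply p)(a := DBound k)) (tr D' L' s)"
    using Abs by (simp only: upd susp_free.simps)
  then show ?case by (simp only: pact.simps tr.simps db.simps)
next
  case (Tup ts)
  then show ?case by auto
qed auto

lemma susp_free_nsubst_occ:
  "susp_free (nsubst \<sigma> s) \<Longrightarrow> (B', p, X) \<in> set (occsB B s) \<Longrightarrow> \<exists>ti. \<sigma> X = Some ti \<and> susp_free ti"
proof (induction s arbitrary: B)
  case (Susp q Y)
  then show ?case by (cases "\<sigma> Y") auto
next
  case (Tup ts)
  then show ?case by fastforce
qed auto

lemma finite_occsB_scope: "(B', p, X) \<in> set (occsB B s) \<Longrightarrow> finite B \<Longrightarrow> finite B'"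
  by (induction s arbitrary: B) auto

lemma subterm_occsB: "t' \<in> subterms s \<Longrightarrow> \<exists>B'. set (occsB B' t') \<subseteq> set (occsB B s)"
proof (induction s arbitrary: B)
  case (Abs a s)
  then show ?case by (auto; blast)
next
  case (Tup ts)
  then show ?case by auto (metis (no_types, lifting) UN_upper order_trans)
qed auto

lemma occs_scope_subset_lam: "(B, p, X) \<in> set (occs t) \<Longrightarrow> B \<subseteq> lam t X"
  by (auto simp: lam_def)

lemma finite_lam: "finite (lam t X)"
proof -
  have "lam t X = \<Union> (fst ` {oc \<in> set (occs t). snd (snd oc) = X})"
    by (auto simp: lam_def; force)
  moreover have "\<forall>oc \<in> set (occs t). finite (fst oc)"
    using finite_occsB_scope[of _ _ _ "{}" t] by (auto simp: occs_def)
  ultimately show ?thesis by auto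
qed

lemma finite_vars: "finite (vars t)"
  by (simp add: vars_eq_image)

lemma lperm_occ:
  assumes "(B, p, X) \<in> set (occs t)"
  shows "\<exists>B0. (B0, lperm t X, X) \<in> set (occs t)"
proof -
  let ?occs_X = "filter (\<lambda>oc. snd (snd oc) = X) (occs t)"
  have "?occs_X \<noteq> []"
    using assms by (force simp: filter_empty_conv)
  then have "hd ?occs_X \<in> set ?occs_X"
    by (rule list.set_sel(1))
  moreover obtain B0 p0 X0 where "hd ?occs_X = (B0, p0, X0)"
    by (rule prod_cases3)
  ultimately show ?thesis
    unfolding lperm_def by auto
qed

section \<open>Argument lists of translated suspensions and closedness\<close>

definition susp_args :: "(atom \<times> 'v) set \<Rightarrow> ('v \<Rightarrow> atom set) \<Rightarrow> atom perm \<Rightarrow> 'v \<Rightarrow> atom set" where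
  "susp_args D L p X = Perm.apply (inverse p) ` L X - {a. (a, X) \<in> D}"

lemma tr_Susp:
  "tr D L (Susp p X) = MVar X (map (\<lambda>a. MAtm (Perm.apply p a)) (sorted_list_of_set (susp_args D L p X)))"
  by (simp add: susp_args_def)

lemma finite_susp_args [simp]: "finite (susp_args D (lam t) p X)"
  by (simp add: susp_args_def finite_lam)

lemma subst_tr_Some:
  "\<sigma> X = Some ti \<Longrightarrow> subst_tr D t \<sigma> X =
     Some (map (Perm.apply (lperm t X)) (sorted_list_of_set (susp_args D (lam t) (lperm t X) X)),
           tr D (lam (pact (lperm t X) ti)) (pact (lperm t X) ti))"
  by (simp add: subst_tr_def susp_args_def Let_def)

lemma dom_subst_tr: "dom (subst_tr D t \<sigma>) = dom \<sigma>"
  by (auto simp: subst_tr_def Let_def split: option.splits)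

lemma sfv_memI: "V X = Some (as, s) \<Longrightarrow> x \<in> fv s \<Longrightarrow> x \<notin> set as \<Longrightarrow> x \<in> sfv V"
  unfolding sfv_def by blast

lemma finite_sfv: "finite (dom V) \<Longrightarrow> finite (sfv V)"
proof -
  assume fin: "finite (dom V)"
  have "{fv s - set as | Z as s. V Z = Some (as, s)} \<subseteq>
        (\<lambda>Z. fv (snd (the (V Z))) - set (fst (the (V Z)))) ` dom V"
    by force
  then have "finite {fv s - set as | Z as s. V Z = Some (as, s)}"
    using finite_subset fin by blast
  then show ?thesis
    unfolding sfv_def by auto
qed

lemma vapp_MVar_rename:
  assumes "V Z = Some (map (Perm.apply q) xs, s)"
  shows "vapp V (MAtm \<circ> f) (MVar Z (map (\<lambda>a. MAtm (Perm.apply p a)) xs))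
       = msubst (MAtm \<circ> (\<lambda>y. if y \<in> set (map (Perm.apply q) xs)
                              then f (Perm.apply p (Perm.apply (inverse q) y)) else y)) s"
proof -
  have args: "map (vapp V (MAtm \<circ> f)) (map (\<lambda>a. MAtm (Perm.apply p a)) xs)
      = map (\<lambda>y. MAtm (f (Perm.apply p (Perm.apply (inverse q) y)))) (map (Perm.apply q) xs)"
    by simp
  have "(\<lambda>a. case map_of (zip (map (Perm.apply q) xs)
                  (map (vapp V (MAtm \<circ> f)) (map (\<lambda>a. MAtm (Perm.apply p a)) xs))) a of
                Some u \<Rightarrow> u | None \<Rightarrow> MAtm a)
      = MAtm \<circ> (\<lambda>y. if y \<in> set (map (Perm.apply q) xs)
                     then f (Perm.apply p (Perm.apply (inverse q) y)) else y)"
    unfolding args map_of_zip_map by (auto simp: fun_eq_iff)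
  with assms show ?thesis
    by (simp only: vapp.simps option.case prod.case)
qed

lemma closed_perm_disagree:
  assumes "closed D t" "(B1, p1, X) \<in> set (occs t)" "(B2, p2, X) \<in> set (occs t)"
    and "Perm.apply p1 a \<noteq> Perm.apply p2 a" "Perm.apply p1 a \<notin> B1 \<or> Perm.apply p2 a \<notin> B2"
  shows "(a, X) \<in> D"
proof -
  have "\<forall>(B1, p1, X1) \<in> set (occs t). \<forall>(B2, p2, X2) \<in> set (occs t). \<forall>a.
         X1 = X2 \<longrightarrow> Perm.apply p1 a \<noteq> Perm.apply p2 a \<longrightarrow>
         (Perm.apply p1 a \<notin> B1 \<or> Perm.apply p2 a \<notin> B2) \<longrightarrow> (a, X1) \<in> D"
    using assms(1) unfolding closed_def by (elim conjE)
  from bspec[OF this assms(2)] have "\<forall>(B2, p2, X2) \<in> set (occs t). \<forall>a.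
         X = X2 \<longrightarrow> Perm.apply p1 a \<noteq> Perm.apply p2 a \<longrightarrow>
         (Perm.apply p1 a \<notin> B1 \<or> Perm.apply p2 a \<notin> B2) \<longrightarrow> (a, X) \<in> D"
    by (simp only: case_prod_conv)
  from bspec[OF this assms(3)] show ?thesis
    using assms(4,5) by (simp only: case_prod_conv) blast
qed

lemma closed_susp_args_subset:
  assumes "closed D t" "(B, p, X) \<in> set (occs t)" "(B0, p0, X) \<in> set (occs t)"
  shows "susp_args D (lam t) p X \<subseteq> susp_args D (lam t) p0 X"
proof
  fix a assume "a \<in> susp_args D (lam t) p X"
  then have pa: "Perm.apply p a \<in> lam t X" and nd: "(a, X) \<notin> D"
    by (auto simp: susp_args_def)
  have "Perm.apply p0 a \<in> lam t X"
  proof (cases "Perm.apply p a = Perm.apply p0 a")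
    case False
    then have "Perm.apply p0 a \<in> B0"
      using closed_perm_disagree[OF assms] nd by blast
    then show ?thesis using occs_scope_subset_lam[OF assms(3)] by auto
  qed (use pa in simp)
  then show "a \<in> susp_args D (lam t) p0 X"
    using nd unfolding susp_args_def by (auto intro!: image_eqI[where x = "Perm.apply p0 a"])
qed

lemma closed_susp_args_eq:
  assumes "closed D t" "(B, p, X) \<in> set (occs t)" "(B0, p0, X) \<in> set (occs t)"
  shows "susp_args D (lam t) p X = susp_args D (lam t) p0 X"
  using closed_susp_args_subset[OF assms] closed_susp_args_subset[OF assms(1,3,2)]
  by (rule subset_antisym)

lemma closed_perm_agree_outside_susp_args:
  assumes "closed D t" "(B, p, X) \<in> set (occs t)" "(B0, p0, X) \<in> set (occs t)"
    and "(c, X) \<notin> D" "c \<notin> susp_args D (lam t) p0 X"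
  shows "Perm.apply p0 c \<notin> lam t X" "Perm.apply p c = Perm.apply p0 c"
proof -
  show notin: "Perm.apply p0 c \<notin> lam t X"
    using assms(4,5) unfolding susp_args_def by (auto intro!: image_eqI[where x = "Perm.apply p0 c"])
  show "Perm.apply p c = Perm.apply p0 c"
  proof (rule ccontr)
    assume "Perm.apply p c \<noteq> Perm.apply p0 c"
    moreover have "Perm.apply p0 c \<notin> B0"
      using notin occs_scope_subset_lam[OF assms(3)] by auto
    ultimately show False
      using closed_perm_disagree[OF assms(1-3)] assms(4) by blast
  qed
qed

section \<open>Translation commutes with substitution\<close>

context
  fixes D :: "(atom \<times> 'v) set" and t :: "('f, 'v) nterm" and \<sigma> :: "'v \<rightharpoonup> ('f, 'v) nterm"
  assumes closed: "closed D t"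
    and fresh_constraints: "\<forall>(a, X) \<in> D. fresh {} a (nsubst \<sigma> (Susp 1 X))"
    and dom_subset_vars: "dom \<sigma> \<subseteq> vars t"
    and ground_instance: "ground (nsubst \<sigma> t)"
begin

lemma occ_instantiated:
  assumes "(B, p, X) \<in> set (occs t)"
  shows "\<exists>ti. \<sigma> X = Some ti \<and> susp_free ti"
proof (rule susp_free_nsubst_occ)
  show "susp_free (nsubst \<sigma> t)"
    using ground_instance by (simp add: ground_iff_susp_free)
  show "(B, p, X) \<in> set (occsB {} t)"
    using assms by (simp add: occs_def)
qed

lemma fresh_of_constraint: "(a, X) \<in> D \<Longrightarrow> \<sigma> X = Some ti \<Longrightarrow> fresh {} a ti"
  using fresh_constraints by auto

lemma finite_sfv_subst_tr: "finite (sfv (subst_tr D t \<sigma>))"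
  by (rule finite_sfv) (simp add: dom_subst_tr finite_subset[OF dom_subset_vars finite_vars])

lemma fv_tr_nsubst_Susp:
  assumes occ: "(B, p, X) \<in> set (occs t)" and x_fv: "x \<in> fv (tr D (lam t) (nsubst \<sigma> (Susp p X)))"
  shows "x \<in> fv (tr D (lam t) (Susp p X)) \<or> (x \<in> sfv (subst_tr D t \<sigma>) \<and> x \<notin> B)"
proof -
  obtain ti where ti: "\<sigma> X = Some ti" "susp_free ti"
    using occ_instantiated[OF occ] by blast
  define p0 where "p0 = lperm t X"
  obtain B0 where occ0: "(B0, p0, X) \<in> set (occs t)"
    using lperm_occ[OF occ] p0_def by blast
  define c where "c = Perm.apply (inverse p) x"
  have x: "x = Perm.apply p c"
    by (simp add: c_def)
  have "x \<in> fv (tr D (lam t) (pact p ti))"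
    using x_fv ti by simp
  then have not_fresh: "\<not> fresh {} c ti"
    using ti(2) by (simp add: fv_tr_susp_free fresh_pact c_def)
  then have unconstrained: "(c, X) \<notin> D"
    using fresh_of_constraint ti(1) by blast
  show ?thesis
  proof (cases "c \<in> susp_args D (lam t) p0 X")
    case True
    then have "c \<in> set (sorted_list_of_set (susp_args D (lam t) p X))"
      using closed_susp_args_eq[OF closed occ occ0] by simp
    then have "x \<in> fv (tr D (lam t) (Susp p X))"
      unfolding tr_Susp x by auto
    then show ?thesis by simp
  next
    case False
    note agree = closed_perm_agree_outside_susp_args[OF closed occ occ0 unconstrained False]
    have x0: "x = Perm.apply p0 c"
      using x agree(2) by simp
    have "x \<in> fv (tr D (lam (pact p0 ti)) (pact p0 ti))"
      using ti(2) not_fresh by (simp add: x0 fv_tr_susp_free fresh_pact)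
    moreover have "x \<notin> set (map (Perm.apply p0) (sorted_list_of_set (susp_args D (lam t) p0 X)))"
      using False by (auto simp: x0 apply_inj)
    moreover have "subst_tr D t \<sigma> X = Some (map (Perm.apply p0) (sorted_list_of_set (susp_args D (lam t) p0 X)),
                                           tr D (lam (pact p0 ti)) (pact p0 ti))"
      using ti(1) unfolding p0_def by (rule subst_tr_Some)
    ultimately have "x \<in> sfv (subst_tr D t \<sigma>)"
      by (blast intro: sfv_memI)
    moreover have "x \<notin> B"
      using occs_scope_subset_lam[OF occ] agree(1) x0 by auto
    ultimately show ?thesis by simp
  qed
qed

lemma fv_tr_nsubst:
  "set (occsB B s) \<subseteq> set (occs t) \<Longrightarrow> x \<in> fv (tr D (lam t) (nsubst \<sigma> s)) \<Longrightarrow>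
   x \<in> fv (tr D (lam t) s) \<or> (x \<in> sfv (subst_tr D t \<sigma>) \<and> x \<notin> B)"
proof (induction s arbitrary: B)
  case (Susp p X)
  show ?case
    by (rule fv_tr_nsubst_Susp) (use Susp.prems in simp_all)
next
  case (Abs b s)
  have "set (occsB (insert b B) s) \<subseteq> set (occs t)" "x \<in> fv (tr D (lam t) (nsubst \<sigma> s))" "x \<noteq> b"
    using Abs.prems by auto
  then show ?case
    using Abs.IH by auto
next
  case (Tup ts)
  then obtain s where s: "s \<in> set ts" "x \<in> fv (tr D (lam t) (nsubst \<sigma> s))"
    by auto
  have "set (occsB B s) \<subseteq> set (occs t)"
    using Tup.prems(1) s(1) by auto
  then show ?case
    using Tup.IH[OF s(1) _ s(2)] s(1) by auto
next
  case (Fn f s)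
  then show ?case by simp
qed simp

lemma db_vapp_subst_tr_Susp:
  assumes occ: "(B, p, X) \<in> set (occs t)" and fixes_outside: "\<forall>x. x \<notin> B \<longrightarrow> f x = x"
  shows "db k g (vapp (subst_tr D t \<sigma>) (MAtm \<circ> f) (tr D (lam t) (Susp p X)))
       = db k (g \<circ> f) (tr D (lam t) (nsubst \<sigma> (Susp p X)))"
proof -
  obtain ti where ti: "\<sigma> X = Some ti" "susp_free ti"
    using occ_instantiated[OF occ] by blast
  define p0 where "p0 = lperm t X"
  obtain B0 where occ0: "(B0, p0, X) \<in> set (occs t)"
    using lperm_occ[OF occ] p0_def by blast
  define xs where "xs = sorted_list_of_set (susp_args D (lam t) p X)"
  have args_eq: "susp_args D (lam t) p X = susp_args D (lam t) p0 X"
    by (rule closed_susp_args_eq[OF closed occ occ0])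
  have set_xs: "set xs = susp_args D (lam t) p0 X"
    unfolding xs_def args_eq by simp
  define s0 where "s0 = tr D (lam (pact p0 ti)) (pact p0 ti)"
  have val: "subst_tr D t \<sigma> X = Some (map (Perm.apply p0) xs, s0)"
    using ti(1) unfolding xs_def args_eq s0_def p0_def by (rule subst_tr_Some)
  define h where "h y = (if y \<in> set (map (Perm.apply p0) xs)
                          then f (Perm.apply p (Perm.apply (inverse p0) y)) else y)" for y
  have lhs: "vapp (subst_tr D t \<sigma>) (MAtm \<circ> f) (tr D (lam t) (Susp p X)) = msubst (MAtm \<circ> h) s0"
    unfolding tr_Susp xs_def[symmetric] h_def by (rule vapp_MVar_rename) (rule val)
  have "db k g (msubst (MAtm \<circ> h) s0) = db k (g \<circ> h) s0"
    by (rule db_msubst_rename)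
  also have "\<dots> = db k (g \<circ> h \<circ> Perm.apply p0) (tr D (lam t) ti)"
    unfolding s0_def by (rule db_tr_pact[OF ti(2)])
  also have "\<dots> = db k (g \<circ> f \<circ> Perm.apply p) (tr D (lam t) ti)"
  proof (rule db_cong)
    fix c assume "c \<in> fv (tr D (lam t) ti)"
    then have unconstrained: "(c, X) \<notin> D"
      using fresh_of_constraint[OF _ ti(1)] fv_tr_susp_free[OF ti(2)] by auto
    show "(g \<circ> h \<circ> Perm.apply p0) c = (g \<circ> f \<circ> Perm.apply p) c"
    proof (cases "c \<in> susp_args D (lam t) p0 X")
      case True
      then show ?thesis
        using set_xs by (simp add: h_def)
    next
      case False
      note agree = closed_perm_agree_outside_susp_args[OF closed occ occ0 unconstrained False]
      have "Perm.apply p0 c \<notin> set (map (Perm.apply p0) xs)"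
        using False set_xs by (auto simp: apply_inj)
      moreover have "f (Perm.apply p0 c) = Perm.apply p0 c"
        using fixes_outside agree(1) occs_scope_subset_lam[OF occ] by blast
      ultimately show ?thesis
        using agree(2) by (simp add: h_def)
    qed
  qed
  also have "\<dots> = db k (g \<circ> f) (tr D (lam t) (pact p ti))"
    by (rule db_tr_pact[OF ti(2), symmetric])
  also have "pact p ti = nsubst \<sigma> (Susp p X)"
    using ti(1) by simp
  finally show ?thesis
    by (simp only: lhs)
qed

text \<open>\<open>f\<close> is the renaming of bound atoms already performed by \<open>vapp\<close> at the binders above
  \<open>s\<close>; it fixes every atom not abstracted there.\<close>

lemma db_vapp_subst_tr:
  "set (occsB B s) \<subseteq> set (occs t) \<Longrightarrow> \<forall>x. x \<notin> B \<longrightarrow> f x = x \<Longrightarrow>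
   db k g (vapp (subst_tr D t \<sigma>) (MAtm \<circ> f) (tr D (lam t) s)) = db k (g \<circ> f) (tr D (lam t) (nsubst \<sigma> s))"
proof (induction s arbitrary: B f k g)
  case (Susp p X)
  show ?case
    by (rule db_vapp_subst_tr_Susp) (use Susp.prems in simp_all)
next
  case (Abs b s)
  let ?V = "subst_tr D t \<sigma>"
  define S where "S = (\<Union>a\<in>fv (tr D (lam t) s) - {b}. fv ((MAtm \<circ> f) a)) \<union> sfv ?V"
  define c where "c = fresh_for S b"
  have c: "c \<notin> S"
    unfolding c_def by (rule fresh_for_notin) (simp add: S_def finite_sfv_subst_tr)
  have occ: "set (occsB (insert b B) s) \<subseteq> set (occs t)"
    using Abs.prems(1) by simp
  have fixes_outside: "\<forall>x. x \<notin> insert b B \<longrightarrow> (f(b := c)) x = x"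
    using Abs.prems(2) by auto
  have "vapp ?V (MAtm \<circ> f) (tr D (lam t) (Abs b s)) = MAbs c (vapp ?V (MAtm \<circ> f(b := c)) (tr D (lam t) s))"
    by (simp add: Let_def S_def c_def comp_MAtm_fun_upd)
  then have "db k g (vapp ?V (MAtm \<circ> f) (tr D (lam t) (Abs b s)))
      = DAbs (db (Suc k) (g(c := DBound k)) (vapp ?V (MAtm \<circ> f(b := c)) (tr D (lam t) s)))"
    by (simp only: db.simps)
  also have "\<dots> = DAbs (db (Suc k) (g(c := DBound k) \<circ> f(b := c)) (tr D (lam t) (nsubst \<sigma> s)))"
    by (simp only: Abs.IH[OF occ fixes_outside])
  also have "\<dots> = DAbs (db (Suc k) ((g \<circ> f)(b := DBound k)) (tr D (lam t) (nsubst \<sigma> s)))"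
  proof (intro arg_cong[where f = DAbs] db_cong)
    fix x assume x: "x \<in> fv (tr D (lam t) (nsubst \<sigma> s))"
    show "(g(c := DBound k) \<circ> f(b := c)) x = ((g \<circ> f)(b := DBound k)) x"
    proof (cases "x = b")
      case False
      have "f x \<in> S"
        using fv_tr_nsubst[OF occ x] False Abs.prems(2) unfolding S_def by auto
      then show ?thesis
        using False c by auto
    qed simp
  qed
  also have "\<dots> = db k (g \<circ> f) (tr D (lam t) (nsubst \<sigma> (Abs b s)))"
    by (simp only: nsubst.simps tr.simps db.simps)
  finally show ?case .
next
  case (Fn h s)
  have "set (occsB B s) \<subseteq> set (occs t)"
    using Fn.prems(1) by simp
  from Fn.IH[OF this Fn.prems(2)] show ?case
    by (simp only: nsubst.simps tr.simps vapp.simps db.simps)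
next
  case (Tup ts)
  have "map (\<lambda>s. db k g (vapp (subst_tr D t \<sigma>) (MAtm \<circ> f) (tr D (lam t) s))) ts
      = map (\<lambda>s. db k (g \<circ> f) (tr D (lam t) (nsubst \<sigma> s))) ts"
  proof (rule map_cong[OF refl])
    fix s assume s: "s \<in> set ts"
    show "db k g (vapp (subst_tr D t \<sigma>) (MAtm \<circ> f) (tr D (lam t) s)) = db k (g \<circ> f) (tr D (lam t) (nsubst \<sigma> s))"
      by (rule Tup.IH[OF s]) (use Tup.prems s in auto)
  qed
  then show ?case
    by (simp only: nsubst.simps tr.simps vapp.simps db.simps map_map comp_def)
qed simp

end

theorem mainTheorem9:
  fixes D :: "(atom \<times> 'v) set" and t :: "('f, 'v) nterm" and \<sigma> :: "'v \<rightharpoonup> ('f, 'v) nterm"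
  assumes "closed D t"
    and "\<forall>(a, X) \<in> D. fresh {} a (nsubst \<sigma> (Susp 1 X))"
    and "dom \<sigma> \<subseteq> vars t"
    and "ground (nsubst \<sigma> t)"
  shows "\<forall>t' \<in> subterms t.
           alpha (tr D (lam t) (nsubst \<sigma> t'))
                 (apply_val (subst_tr D t \<sigma>) (tr D (lam t) t'))"
proof
  fix t' assume "t' \<in> subterms t"
  then obtain B where "set (occsB B t') \<subseteq> set (occs t)"
    using subterm_occsB[of t' t "{}"] by (auto simp: occs_def)
  then have "db 0 DFree (vapp (subst_tr D t \<sigma>) (MAtm \<circ> id) (tr D (lam t) t'))
           = db 0 (DFree \<circ> id) (tr D (lam t) (nsubst \<sigma> t'))"
    by (rule db_vapp_subst_tr[OF assms]) simp
  then have "db 0 DFree (tr D (lam t) (nsubst \<sigma> t')) = db 0 DFree (apply_val (subst_tr D t \<sigma>) (tr D (lam t) t'))"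
    by (simp add: apply_val_def)
  then show "alpha (tr D (lam t) (nsubst \<sigma> t')) (apply_val (subst_tr D t \<sigma>) (tr D (lam t) t'))"
    by (rule alpha_if_db_eq)
qed

end
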